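(* Let $G=(V,E)$ be a graph, let $K$ be a positive integer, and let $P$ be the output of the port-based randomized greedy procedure (Algorithm 2) described in the context, run on $G$ with parameter $K$. Then $$\tfrac12\rho(G)\le\mathbb{E}|P|\le\left(1+\tfrac{2}{K}\right)\rho(G),$$ where the expectation is over the random permutation used by the procedure.
   Context: $\rho(G)$ is the maximum number of edges in a path cover of $G$ (a collection of vertex-disjoint simple paths). Procedure (Algorithm 2): each vertex $w$ has two ports $w^0,w^1$. Build a graph $H$ whose vertices are, for every edge $(u,v)\in E$, $K+2$ vertices: one corresponding to $(u,v)$ occupying $u^0$ and $v^1$, one corresponding to $(u,v)$ occupying $u^1$ and $v^0$, and $K$ each corresponding to $(u,v)$ occupying $u^0$ and $v^0$. Two distinct vertices $a,b$ of $H$, corresponding to edges $e_a,e_b$ of $G$, are adjacent in $H$ if $e_a=e_b$, or if $e_a$ and $e_b$ share exactly one endpoint $w$ and $a,b$ occupy the same port of $w$. Pick a uniformly random permutation of the vertices of $H$ and compute the randomized greedy maximal independent set $I$: scan the vertices in this order and add a vertex to $I$ if none of its neighbors is already in $I$. The output $P$ is the set of edges of $G$ corresponding to vertices of $I$. *)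

theory Defs
  imports "HOL-Probability.Probability" "HOL-Combinatorics.Multiset_Permutations"
begin

definition simple_graph :: "'a set \<Rightarrow> 'a set set \<Rightarrow> bool" where
  "simple_graph V E \<longleftrightarrow> finite V \<and> (\<forall>e\<in>E. e \<subseteq> V \<and> card e = 2)"

definition is_path :: "'a set set \<Rightarrow> 'a list \<Rightarrow> bool" where
  "is_path E p \<longleftrightarrow> p \<noteq> [] \<and> distinct p \<and> (\<forall>i. Suc i < length p \<longrightarrow> {p ! i, p ! Suc i} \<in> E)"

definition path_cover :: "'a set \<Rightarrow> 'a set set \<Rightarrow> 'a list set \<Rightarrow> bool" where
  "path_cover V E Ps \<longleftrightarrow> finite Ps \<and> (\<forall>p\<in>Ps. is_path E p \<and> set p \<subseteq> V)
     \<and> (\<forall>p\<in>Ps. \<forall>q\<in>Ps. p \<noteq> q \<longrightarrow> set p \<inter> set q = {})"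

definition pc_edges :: "'a list set \<Rightarrow> nat" where
  "pc_edges Ps = (\<Sum>p\<in>Ps. length p - 1)"

definition rho :: "'a set \<Rightarrow> 'a set set \<Rightarrow> nat" where
  "rho V E = Max {pc_edges Ps | Ps. path_cover V E Ps}"

(* Vertices of H: triples (e, f, i) where e is an edge of G, f assigns a port
   (0 or 1) to each endpoint of e (and 0 outside e), and i is a copy index. *)
type_synonym 'a hvert = "'a set \<times> ('a \<Rightarrow> nat) \<times> nat"

definition H_vertices :: "'a set set \<Rightarrow> nat \<Rightarrow> 'a hvert set" where
  "H_vertices E K = {(e, f, i). e \<in> E \<and> (\<forall>x. x \<notin> e \<longrightarrow> f x = 0) \<and> (\<forall>x\<in>e. f x \<in> {0, 1}) \<and>
      (((\<exists>u\<in>e. \<exists>v\<in>e. u \<noteq> v \<and> f u = 0 \<and> f v = 1) \<and> i = 0) \<or>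
       ((\<forall>x\<in>e. f x = 0) \<and> i < K))}"

definition H_adj :: "'a hvert \<Rightarrow> 'a hvert \<Rightarrow> bool" where
  "H_adj a b \<longleftrightarrow> a \<noteq> b \<and>
     (fst a = fst b \<or>
      (\<exists>w. fst a \<inter> fst b = {w} \<and> fst (snd a) w = fst (snd b) w))"

definition greedy_mis :: "('b \<Rightarrow> 'b \<Rightarrow> bool) \<Rightarrow> 'b list \<Rightarrow> 'b set" where
  "greedy_mis adj xs = foldl (\<lambda>I x. if (\<forall>y\<in>I. \<not> adj x y) then insert x I else I) {} xs"

definition alg2_output :: "'a hvert list \<Rightarrow> 'a set set" where
  "alg2_output xs = fst ` greedy_mis H_adj xs"

definition alg2_expected :: "'a set set \<Rightarrow> nat \<Rightarrow> real" where
  "alg2_expected E K = measure_pmf.expectation (pmf_of_set (permutations_of_set (H_vertices E K)))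
      (\<lambda>xs. real (card (alg2_output xs)))"

end

theory Submission
  imports Defs
begin

(*
  Lower bound. In an independent set I of H, copies of the same edge exclude each other and two
  vertices whose edges share an endpoint occupy different ports there; so fst is injective on I
  and at most two edges of I meet at any vertex. If I is maximal, every edge c of G meets at
  least two incidences (y, w) with y in I and w in c: either c itself is chosen, or both mixed
  copies of c are blocked by chosen neighbours, which must differ in endpoint or port. Each
  incidence lies on at most two edges of a path cover, so double counting gives rho(G) <= 2 |I|.

  Upper bound. Call an accepted mixed vertex displaced if the endpoint where it uses port 1 is
  used with port 0 by a vertex accepted later. Adding the non-displaced accepted vertices in
  reverse order of the permutation keeps a path cover: a new edge meets at most one later edge at
  each endpoint, and if it closed a cycle, ports would alternate along the path between its
  endpoints, making it displaced. Hence |I| <= rho(G) + |D|. Transposing a displaced vertex with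
  any of the K zero copies of its edge yields a permutation in which that zero copy is accepted;
  accepted zero copies are never displaced and every edge has only two mixed copies, so summing
  over all permutations gives K E|D| <= 2 rho(G).
*)

lemma double_counting:
  assumes "finite A" "finite B"
  shows "(\<Sum>a\<in>A. card {b\<in>B. R a b}) = (\<Sum>b\<in>B. card {a\<in>A. R a b})"
proof -
  have "\<And>a. card {b\<in>B. R a b} = (\<Sum>b\<in>B. if R a b then 1 else 0)"
    "\<And>b. card {a\<in>A. R a b} = (\<Sum>a\<in>A. if R a b then 1 else 0)"
    using assms by (simp_all add: sum.If_cases Int_def)
  then show ?thesis
    by (simp add: sum.swap[of _ A])
qed

section \<open>Greedy maximal independent sets\<close>

lemma greedy_mis_Nil [simp]: "greedy_mis adj [] = {}"
  by (simp add: greedy_mis_def)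

lemma greedy_mis_snoc:
  "greedy_mis adj (xs @ [x]) =
     (if \<forall>y\<in>greedy_mis adj xs. \<not> adj x y then insert x (greedy_mis adj xs) else greedy_mis adj xs)"
  by (simp add: greedy_mis_def)

lemma greedy_mis_subset: "greedy_mis adj xs \<subseteq> set xs"
  by (induction xs rule: rev_induct) (auto simp: greedy_mis_snoc)

lemma greedy_mis_append_mono: "greedy_mis adj xs \<subseteq> greedy_mis adj (xs @ ys)"
  by (induction ys rule: rev_induct) (auto simp: greedy_mis_snoc simp flip: append_assoc)

lemma greedy_mis_append_subset: "greedy_mis adj (xs @ ys) \<subseteq> greedy_mis adj xs \<union> set ys"
  by (induction ys rule: rev_induct) (auto simp: greedy_mis_snoc simp flip: append_assoc)

lemma greedy_mis_take:
  assumes "distinct xs"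
  shows "greedy_mis adj (take t xs) = greedy_mis adj xs \<inter> set (take t xs)"
proof -
  have "set (take t xs) \<inter> set (drop t xs) = {}"
    using assms by (metis append_take_drop_id distinct_append)
  then show ?thesis
    using greedy_mis_append_subset[of adj "take t xs" "drop t xs"]
      greedy_mis_append_mono[of adj "take t xs" "drop t xs"] greedy_mis_subset[of adj "take t xs"]
    by auto
qed

lemma greedy_mis_independent:
  assumes "\<And>a b. adj a b \<Longrightarrow> adj b a" and "\<And>a. \<not> adj a a"
  shows "x \<in> greedy_mis adj xs \<Longrightarrow> y \<in> greedy_mis adj xs \<Longrightarrow> \<not> adj x y"
proof (induction xs arbitrary: x y rule: rev_induct)
  case (snoc z zs)
  show ?case
  proof (cases "\<forall>y\<in>greedy_mis adj zs. \<not> adj z y")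
    case True
    with snoc.prems have "x \<in> insert z (greedy_mis adj zs)" "y \<in> insert z (greedy_mis adj zs)"
      by (simp_all add: greedy_mis_snoc)
    with True snoc.IH assms show ?thesis
      by blast
  next
    case False
    with snoc show ?thesis
      by (simp add: greedy_mis_snoc)
  qed
qed simp

lemma greedy_mis_maximal:
  "x \<in> set xs \<Longrightarrow> x \<notin> greedy_mis adj xs \<Longrightarrow> \<exists>y\<in>greedy_mis adj xs. adj x y"
proof (induction xs rule: rev_induct)
  case (snoc z zs)
  then show ?case
    using greedy_mis_append_mono[of adj zs "[z]"] by (auto simp: greedy_mis_snoc split: if_splits)
qed simp

lemma nth_in_greedy_mis_iff:
  assumes "distinct xs" "t < length xs"
  shows "xs ! t \<in> greedy_mis adj xs \<longleftrightarrow> (\<forall>y\<in>greedy_mis adj (take t xs). \<not> adj (xs ! t) y)"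
proof -
  have take_Suc: "take (Suc t) xs = take t xs @ [xs ! t]"
    using assms(2) by (simp add: take_Suc_conv_app_nth)
  then have "xs ! t \<notin> set (take t xs)"
    using assms(1) distinct_take[OF assms(1), of "Suc t"] by simp
  then have "xs ! t \<notin> greedy_mis adj (take t xs)"
    using greedy_mis_subset[of adj "take t xs"] by blast
  moreover have "xs ! t \<in> greedy_mis adj xs \<longleftrightarrow> xs ! t \<in> greedy_mis adj (take (Suc t) xs)"
    using greedy_mis_take[OF assms(1), of adj "Suc t"] by (auto simp: take_Suc)
  ultimately show ?thesis
    by (simp add: take_Suc greedy_mis_snoc)
qed

section \<open>The port graph\<close>

abbreviation port :: "'a hvert \<Rightarrow> 'a \<Rightarrow> nat" where
  "port y \<equiv> fst (snd y)"

lemma H_adj_sym: "H_adj a b \<Longrightarrow> H_adj b a"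
  unfolding H_adj_def by (auto simp: Int_commute)

lemma H_adj_irrefl: "\<not> H_adj a a"
  unfolding H_adj_def by simp

lemma simple_graph_edgeE:
  assumes "simple_graph V E" "e \<in> E"
  obtains u v where "u \<noteq> v" "e = {u, v}"
  using assms unfolding simple_graph_def by (meson card_2_iff)

lemma simple_graph_edge_subset: "simple_graph V E \<Longrightarrow> e \<in> E \<Longrightarrow> e \<subseteq> V"
  unfolding simple_graph_def by blast

lemma simple_graph_finite_edges: "simple_graph V E \<Longrightarrow> finite E"
  unfolding simple_graph_def by (meson Pow_iff finite_Pow_iff rev_finite_subset subsetI)

lemma simple_graph_edges_Int:
  assumes "simple_graph V E" "e \<in> E" "e' \<in> E" "e \<noteq> e'" "w \<in> e" "w \<in> e'"
  shows "e \<inter> e' = {w}"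
proof -
  obtain u v where "e = {u, v}"
    using assms(1,2) by (rule simple_graph_edgeE)
  moreover obtain u' v' where "u' \<noteq> v'" "e' = {u', v'}"
    using assms(1,3) by (rule simple_graph_edgeE)
  ultimately show ?thesis
    using assms(4-6) by auto
qed

lemma finite_H_vertices:
  assumes "simple_graph V E"
  shows "finite (H_vertices E K)"
proof -
  let ?F = "{f :: 'a \<Rightarrow> nat. \<forall>x. (x \<in> V \<longrightarrow> f x \<in> {0..1}) \<and> (x \<notin> V \<longrightarrow> f x = 0)}"
  have "finite ?F"
    using finite_set_of_finite_funs[of V "{0..1::nat}" 0] assms unfolding simple_graph_def by simp
  moreover have "H_vertices E K \<subseteq> E \<times> ?F \<times> {..K}"
  proof
    fix y
    assume "y \<in> H_vertices E K"
    then obtain e f i where y: "y = (e, f, i)" and "e \<in> E" "i \<le> K"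
      and f: "\<forall>x. x \<notin> e \<longrightarrow> f x = 0" "\<forall>x\<in>e. f x \<in> {0, 1}"
      unfolding H_vertices_def by auto
    have "f x \<in> {0..1}" for x
      using f by (cases "x \<in> e") auto
    then have "f \<in> ?F"
      using f simple_graph_edge_subset[OF assms \<open>e \<in> E\<close>] by blast
    with y \<open>e \<in> E\<close> \<open>i \<le> K\<close> show "y \<in> E \<times> ?F \<times> {..K}"
      by simp
  qed
  ultimately show ?thesis
    using simple_graph_finite_edges[OF assms] by (meson finite_SigmaI finite_atMost finite_subset)
qed

lemma H_vertex_edge: "y \<in> H_vertices E K \<Longrightarrow> fst y \<in> E"
  unfolding H_vertices_def by auto

lemma H_vertex_port_le_1:
  assumes "y \<in> H_vertices E K" "w \<in> fst y"
  shows "port y w \<le> 1"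
proof -
  have "port y w \<in> {0, 1}"
    using assms unfolding H_vertices_def by auto
  then show ?thesis
    by auto
qed

lemma H_vertex_port_one_unique:
  assumes "simple_graph V E" "y \<in> H_vertices E K" "u \<in> fst y" "v \<in> fst y" "u \<noteq> v" "port y u = 1"
  shows "port y v = 0"
proof -
  obtain e f i where y: "y = (e, f, i)"
    by (cases y)
  with assms(2) have "e \<in> E"
    "((\<exists>u\<in>e. \<exists>v\<in>e. u \<noteq> v \<and> f u = 0 \<and> f v = 1) \<and> i = 0) \<or> ((\<forall>x\<in>e. f x = 0) \<and> i < K)"
    unfolding H_vertices_def by auto
  with assms(1,3-6) y show ?thesis
    by (elim simple_graph_edgeE) auto
qed

definition mixed_copy :: "'a set \<Rightarrow> 'a \<Rightarrow> 'a hvert" where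
  "mixed_copy e b = (e, \<lambda>z. if z = b then 1 else 0, 0)"

definition zero_copy :: "'a set \<Rightarrow> nat \<Rightarrow> 'a hvert" where
  "zero_copy e i = (e, \<lambda>_. 0, i)"

lemma mixed_copy_in_H_vertices:
  assumes "simple_graph V E" "e \<in> E" "b \<in> e"
  shows "mixed_copy e b \<in> H_vertices E K"
proof -
  obtain u v where "u \<noteq> v" "e = {u, v}"
    using assms(1,2) by (rule simple_graph_edgeE)
  then obtain a where "a \<in> e" "a \<noteq> b"
    by blast
  with assms show ?thesis
    unfolding H_vertices_def mixed_copy_def by auto
qed

lemma zero_copy_in_H_vertices: "e \<in> E \<Longrightarrow> i < K \<Longrightarrow> zero_copy e i \<in> H_vertices E K"
  unfolding H_vertices_def zero_copy_def by auto

lemma H_vertex_eq_mixed_copy: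
  assumes "simple_graph V E" "x \<in> H_vertices E K" "b \<in> fst x" "port x b = 1"
  shows "x = mixed_copy (fst x) b"
proof -
  obtain e f i where x: "x = (e, f, i)"
    by (cases x)
  with assms(2) have f_outside: "\<forall>z. z \<notin> e \<longrightarrow> f z = 0" and "i = 0"
    using assms(3,4) unfolding H_vertices_def by auto
  have "f z = (if z = b then 1 else 0)" for z
    using H_vertex_port_one_unique[OF assms(1,2), of b z] assms(3,4) f_outside x
    by (cases "z \<in> e") auto
  with \<open>i = 0\<close> show ?thesis
    unfolding x mixed_copy_def by auto
qed

definition mixed_vertices :: "'a set set \<Rightarrow> nat \<Rightarrow> 'a hvert set" where
  "mixed_vertices E K = {x \<in> H_vertices E K. \<exists>b\<in>fst x. port x b = 1}"

lemma card_mixed_vertices_on_edge: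
  assumes "simple_graph V E" "e \<in> E"
  shows "card {x \<in> mixed_vertices E K. fst x = e} \<le> 2"
proof -
  have "finite e" "card e = 2"
    using assms unfolding simple_graph_def by (auto intro: card_ge_0_finite)
  have "{x \<in> mixed_vertices E K. fst x = e} \<subseteq> mixed_copy e ` e"
  proof
    fix x
    assume "x \<in> {x \<in> mixed_vertices E K. fst x = e}"
    then obtain b where "x \<in> H_vertices E K" "fst x = e" "b \<in> e" "port x b = 1"
      unfolding mixed_vertices_def by blast
    then have "x = mixed_copy e b"
      using H_vertex_eq_mixed_copy[OF assms(1), of x K b] by metis
    with \<open>b \<in> e\<close> show "x \<in> mixed_copy e ` e"
      by blast
  qed
  then have "card {x \<in> mixed_vertices E K. fst x = e} \<le> card (mixed_copy e ` e)"
    using \<open>finite e\<close> by (intro card_mono) auto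
  also have "\<dots> \<le> card e"
    using \<open>finite e\<close> by (rule card_image_le)
  finally show ?thesis
    using \<open>card e = 2\<close> by simp
qed

section \<open>Paths and path covers\<close>

fun path_edges :: "'a list \<Rightarrow> 'a set set" where
  "path_edges (u # v # p) = insert {u, v} (path_edges (v # p))"
| "path_edges _ = {}"

definition cover_edges :: "'a list set \<Rightarrow> 'a set set" where
  "cover_edges Ps = (\<Union>p\<in>Ps. path_edges p)"

definition covers :: "'a set \<Rightarrow> 'a list set \<Rightarrow> bool" where
  "covers V Ps \<longleftrightarrow> (\<forall>v\<in>V. \<exists>p\<in>Ps. v \<in> set p)"

lemma path_edges_Cons: "p \<noteq> [] \<Longrightarrow> path_edges (u # p) = insert {u, hd p} (path_edges p)"
  by (cases p) auto

lemma path_edges_conv_nth: "path_edges p = (\<lambda>i. {p ! i, p ! Suc i}) ` {..<length p - 1}"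
proof (induction p rule: path_edges.induct)
  case (1 u v p)
  have "{..<length (u # v # p) - 1} = insert 0 (Suc ` {..<length (v # p) - 1})"
    by (simp add: lessThan_Suc_eq_insert_0)
  with "1.IH" show ?case
    by (simp add: image_image)
qed auto

lemma path_edges_nth: "Suc i < length p \<Longrightarrow> {p ! i, p ! Suc i} \<in> path_edges p"
  unfolding path_edges_conv_nth by auto

lemma path_edges_subset: "c \<in> path_edges p \<Longrightarrow> c \<subseteq> set p"
  by (induction p rule: path_edges.induct) auto

lemma finite_path_edges [simp]: "finite (path_edges p)"
  by (simp add: path_edges_conv_nth)

lemma is_path_iff: "is_path E p \<longleftrightarrow> p \<noteq> [] \<and> distinct p \<and> path_edges p \<subseteq> E"
  unfolding is_path_def path_edges_conv_nth image_subset_iff by (auto simp: less_diff_conv)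

lemma path_edges_append:
  "xs \<noteq> [] \<Longrightarrow> ys \<noteq> [] \<Longrightarrow>
     path_edges (xs @ ys) = insert {last xs, hd ys} (path_edges xs \<union> path_edges ys)"
proof (induction xs)
  case (Cons x xs)
  then show ?case
    by (cases "xs = []") (auto simp: path_edges_Cons)
qed simp

lemma path_edges_rev [simp]: "path_edges (rev p) = path_edges p"
proof (induction p)
  case (Cons u p)
  then show ?case
    by (cases "p = []") (auto simp: path_edges_append path_edges_Cons last_rev insert_commute)
qed simp

lemma card_path_edges: "distinct p \<Longrightarrow> card (path_edges p) = length p - 1"
proof (induction p rule: path_edges.induct)
  case (1 u v p)
  then have "{u, v} \<notin> path_edges (v # p)"
    using path_edges_subset by fastforce
  then show ?case
    using 1 by simp
qed auto

lemma nth_in_path_edge_iff: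
  assumes "distinct p" "k < length p" "i < length p - 1"
  shows "p ! k \<in> {p ! i, p ! Suc i} \<longleftrightarrow> i = k \<or> Suc i = k"
  using assms by (auto simp: nth_eq_iff_index_eq)

lemma card_path_edges_containing_le_2:
  assumes "distinct p"
  shows "card {c \<in> path_edges p. w \<in> c} \<le> 2"
proof (cases "w \<in> set p")
  case True
  then obtain k where k: "k < length p" "w = p ! k"
    by (auto simp: in_set_conv_nth)
  have "{c \<in> path_edges p. w \<in> c} \<subseteq> (\<lambda>i. {p ! i, p ! Suc i}) ` {k - 1, k}"
  proof
    fix c
    assume "c \<in> {c \<in> path_edges p. w \<in> c}"
    then obtain i where "i < length p - 1" "c = {p ! i, p ! Suc i}" "p ! k \<in> c"
      using k(2) by (auto simp: path_edges_conv_nth)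
    with nth_in_path_edge_iff[OF assms k(1)] show "c \<in> (\<lambda>i. {p ! i, p ! Suc i}) ` {k - 1, k}"
      by force
  qed
  then have "card {c \<in> path_edges p. w \<in> c} \<le> card ((\<lambda>i. {p ! i, p ! Suc i}) ` {k - 1, k})"
    by (intro card_mono) auto
  also have "\<dots> \<le> card {k - 1, k}"
    by (rule card_image_le) simp
  also have "\<dots> \<le> 2"
    by (simp add: card_insert_if)
  finally show ?thesis .
next
  case False
  then have "{c \<in> path_edges p. w \<in> c} = {}"
    using path_edges_subset by fastforce
  then show ?thesis
    by (metis card.empty zero_le)
qed

lemma path_endpoint_if_single_edge:
  assumes "distinct p" "w \<in> set p"
    and single: "\<And>c c'. c \<in> path_edges p \<Longrightarrow> c' \<in> path_edges p \<Longrightarrow> w \<in> c \<Longrightarrow> w \<in> c' \<Longrightarrow> c = c'"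
  shows "w = hd p \<or> w = last p"
proof (rule ccontr)
  assume not_end: "\<not> (w = hd p \<or> w = last p)"
  obtain k where k: "k < length p" "w = p ! k"
    using assms(2) by (auto simp: in_set_conv_nth)
  moreover have "p \<noteq> []"
    using assms(2) by auto
  ultimately have "k \<noteq> 0" "k \<noteq> length p - 1"
    using not_end by (metis hd_conv_nth, metis last_conv_nth)
  then have "0 < k" "Suc k < length p"
    using k(1) by linarith+
  then have "{p ! (k - 1), p ! k} \<in> path_edges p" "{p ! k, p ! Suc k} \<in> path_edges p"
    using path_edges_nth[of "k - 1" p] path_edges_nth[of k p] by simp_all
  then have "{p ! (k - 1), p ! k} = {p ! k, p ! Suc k}"
    using single k(2) by blast
  then show False
    using assms(1) \<open>0 < k\<close> \<open>Suc k < length p\<close>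
    by (auto simp: doubleton_eq_iff nth_eq_iff_index_eq)
qed

lemma path_cover_pathD:
  "path_cover V E Ps \<Longrightarrow> p \<in> Ps \<Longrightarrow> p \<noteq> [] \<and> distinct p \<and> path_edges p \<subseteq> E \<and> set p \<subseteq> V"
  unfolding path_cover_def is_path_iff by blast

lemma path_cover_same_path:
  "path_cover V E Ps \<Longrightarrow> p \<in> Ps \<Longrightarrow> q \<in> Ps \<Longrightarrow> w \<in> set p \<Longrightarrow> w \<in> set q \<Longrightarrow> p = q"
  unfolding path_cover_def by blast

lemma path_edges_nonempty: "c \<in> path_edges p \<Longrightarrow> c \<noteq> {}"
  by (auto simp: path_edges_conv_nth)

lemma finite_cover_edges: "path_cover V E Ps \<Longrightarrow> finite (cover_edges Ps)"
  unfolding path_cover_def cover_edges_def by simp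

lemma cover_edges_subset: "path_cover V E Ps \<Longrightarrow> cover_edges Ps \<subseteq> E"
  unfolding cover_edges_def using path_cover_pathD by blast

lemma card_cover_edges:
  assumes "path_cover V E Ps"
  shows "card (cover_edges Ps) = pc_edges Ps"
proof -
  have "path_edges p \<inter> path_edges q = {}" if "p \<in> Ps" "q \<in> Ps" "p \<noteq> q" for p q
    using path_cover_same_path[OF assms that(1,2)] path_edges_subset path_edges_nonempty that(3)
    by blast
  then have "card (cover_edges Ps) = (\<Sum>p\<in>Ps. card (path_edges p))"
    using assms unfolding cover_edges_def path_cover_def by (intro card_UN_disjoint) auto
  also have "\<dots> = pc_edges Ps"
    unfolding pc_edges_def using path_cover_pathD[OF assms] by (intro sum.cong) (auto simp: card_path_edges)
  finally show ?thesis .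
qed

lemma card_cover_edges_containing_le_2:
  assumes "path_cover V E Ps"
  shows "card {c \<in> cover_edges Ps. w \<in> c} \<le> 2"
proof (cases "\<exists>p\<in>Ps. w \<in> set p")
  case True
  then obtain p where p: "p \<in> Ps" "w \<in> set p"
    by blast
  have "{c \<in> cover_edges Ps. w \<in> c} = {c \<in> path_edges p. w \<in> c}"
    using path_cover_same_path[OF assms _ p(1) _ p(2)] path_edges_subset p(1)
    unfolding cover_edges_def by blast
  then show ?thesis
    using card_path_edges_containing_le_2[of p w] path_cover_pathD[OF assms p(1)] by simp
next
  case False
  then have "{c \<in> cover_edges Ps. w \<in> c} = {}"
    unfolding cover_edges_def using path_edges_subset by blast
  then show ?thesis
    by (metis card.empty zero_le)
qed

lemma
  assumes "simple_graph V E"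
  shows card_cover_edges_le_rho: "path_cover V E Ps \<Longrightarrow> card (cover_edges Ps) \<le> rho V E"
    and rho_eq_card_cover_edges: "\<exists>Ps. path_cover V E Ps \<and> card (cover_edges Ps) = rho V E"
proof -
  let ?S = "{pc_edges Ps | Ps. path_cover V E Ps}"
  have "pc_edges Ps \<le> card E" if "path_cover V E Ps" for Ps
    using card_mono[OF simple_graph_finite_edges[OF assms] cover_edges_subset[OF that]]
    by (simp add: card_cover_edges[OF that])
  then have "?S \<subseteq> {..card E}"
    by auto
  then have "finite ?S"
    by (rule finite_subset) simp
  show "card (cover_edges Ps) \<le> rho V E" if "path_cover V E Ps"
    unfolding rho_def card_cover_edges[OF that] using \<open>finite ?S\<close> that by (intro Max_ge) auto
  have "path_cover V E {}"
    unfolding path_cover_def by simp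
  then have "rho V E \<in> ?S"
    unfolding rho_def using \<open>finite ?S\<close> by (intro Max_in) auto
  then show "\<exists>Ps. path_cover V E Ps \<and> card (cover_edges Ps) = rho V E"
    using card_cover_edges by fastforce
qed

lemma path_cover_singletons:
  assumes "finite V"
  shows "path_cover V E ((\<lambda>v. [v]) ` V)" "covers V ((\<lambda>v. [v]) ` V)" "cover_edges ((\<lambda>v. [v]) ` V) = {}"
  using assms unfolding path_cover_def covers_def cover_edges_def is_path_def by auto

lemma join_paths:
  assumes "pa \<noteq> []" "distinct pa" "pb \<noteq> []" "distinct pb" "set pa \<inter> set pb = {}"
    and "a \<in> {hd pa, last pa}" "b \<in> {hd pb, last pb}"
  obtains q where "q \<noteq> []" "distinct q" "set q = set pa \<union> set pb"
    "path_edges q = insert {a, b} (path_edges pa \<union> path_edges pb)"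
proof -
  define qa where "qa = (if last pa = a then pa else rev pa)"
  define qb where "qb = (if hd pb = b then pb else rev pb)"
  have "qa \<noteq> []" "qb \<noteq> []" "last qa = a" "hd qb = b"
    using assms(1,3,6,7) unfolding qa_def qb_def by (auto simp: last_rev hd_rev)
  moreover have "set qa = set pa" "set qb = set pb" "distinct qa" "distinct qb"
    "path_edges qa = path_edges pa" "path_edges qb = path_edges pb"
    unfolding qa_def qb_def using assms(2,4) by simp_all
  ultimately show ?thesis
    using that[of "qa @ qb"] path_edges_append[of qa qb] assms(5) by simp
qed

lemma path_cover_replace_two:
  assumes cover: "path_cover V E Ps" "covers V Ps" and "pa \<in> Ps" "pb \<in> Ps"
    and q: "is_path E q" "set q \<subseteq> V" "set q = set pa \<union> set pb"
  shows "path_cover V E (insert q (Ps - {pa, pb}))" "covers V (insert q (Ps - {pa, pb}))"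
proof -
  let ?Ps' = "insert q (Ps - {pa, pb})"
  have q_apart: "set r \<inter> set q = {}" "set q \<inter> set r = {}" if "r \<in> Ps - {pa, pb}" for r
    using cover(1) assms(3,4) that unfolding q(3) path_cover_def by blast+
  have "finite ?Ps'"
    using cover(1) unfolding path_cover_def by simp
  moreover have "\<forall>p\<in>?Ps'. is_path E p \<and> set p \<subseteq> V"
    using cover(1) q(1,2) unfolding path_cover_def by auto
  moreover have "set p \<inter> set p' = {}" if "p \<in> ?Ps'" "p' \<in> ?Ps'" "p \<noteq> p'" for p p'
  proof (cases "p = q \<or> p' = q")
    case True
    with that q_apart show ?thesis
      by auto
  next
    case False
    with that cover(1) show ?thesis
      unfolding path_cover_def by auto
  qed
  ultimately show "path_cover V E ?Ps'"
    unfolding path_cover_def by blast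
  show "covers V ?Ps'"
    using cover(2) q(3) unfolding covers_def by blast
qed

lemma path_cover_merge:
  assumes cover: "path_cover V E Ps" "covers V Ps"
    and paths: "pa \<in> Ps" "pb \<in> Ps" "pa \<noteq> pb"
    and ends: "a \<in> {hd pa, last pa}" "b \<in> {hd pb, last pb}" and "{a, b} \<in> E"
  obtains Ps' where "path_cover V E Ps'" "covers V Ps'" "cover_edges Ps' = insert {a, b} (cover_edges Ps)"
proof -
  have pa: "pa \<noteq> []" "distinct pa" "path_edges pa \<subseteq> E" "set pa \<subseteq> V"
    and pb: "pb \<noteq> []" "distinct pb" "path_edges pb \<subseteq> E" "set pb \<subseteq> V"
    using path_cover_pathD[OF cover(1)] paths(1,2) by auto
  have "set pa \<inter> set pb = {}"
    using cover(1) paths unfolding path_cover_def by blast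
  obtain q where q: "q \<noteq> []" "distinct q" "set q = set pa \<union> set pb"
    and q_edges: "path_edges q = insert {a, b} (path_edges pa \<union> path_edges pb)"
    using pa(1,2) pb(1,2) \<open>set pa \<inter> set pb = {}\<close> ends by (rule join_paths)
  then have "is_path E q" "set q \<subseteq> V"
    unfolding is_path_iff using pa pb \<open>{a, b} \<in> E\<close> by simp_all
  note Ps' = path_cover_replace_two[OF cover paths(1,2) this q(3)]
  have "Ps = insert pa (insert pb (Ps - {pa, pb}))"
    using paths(1,2) by blast
  then have "cover_edges Ps = path_edges pa \<union> path_edges pb \<union> cover_edges (Ps - {pa, pb})"
    unfolding cover_edges_def by (metis UN_insert Un_assoc)
  moreover have "cover_edges (insert q (Ps - {pa, pb})) = path_edges q \<union> cover_edges (Ps - {pa, pb})"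
    unfolding cover_edges_def by simp
  ultimately have "cover_edges (insert q (Ps - {pa, pb})) = insert {a, b} (cover_edges Ps)"
    unfolding q_edges by auto
  with Ps' show ?thesis
    using that by blast
qed

section \<open>Independent sets of the port graph and the lower bound\<close>

locale H_independent =
  fixes V :: "'a set" and E :: "'a set set" and K :: nat and I :: "'a hvert set"
  assumes graph: "simple_graph V E"
    and subset_H: "I \<subseteq> H_vertices E K"
    and independent: "x \<in> I \<Longrightarrow> y \<in> I \<Longrightarrow> \<not> H_adj x y"
begin

lemma finite_I: "finite I"
  using finite_subset[OF subset_H finite_H_vertices[OF graph]] .

lemma edge_in_E: "y \<in> I \<Longrightarrow> fst y \<in> E"
  by (rule H_vertex_edge[OF subsetD[OF subset_H]])

lemma card_edge: "y \<in> I \<Longrightarrow> card (fst y) = 2"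
  using edge_in_E graph unfolding simple_graph_def by blast

lemma port_le_1: "y \<in> I \<Longrightarrow> w \<in> fst y \<Longrightarrow> port y w \<le> 1"
  by (rule H_vertex_port_le_1[OF subsetD[OF subset_H]])

lemma port_one_unique:
  "y \<in> I \<Longrightarrow> u \<in> fst y \<Longrightarrow> v \<in> fst y \<Longrightarrow> u \<noteq> v \<Longrightarrow> port y u = 1 \<Longrightarrow> port y v = 0"
  by (rule H_vertex_port_one_unique[OF graph subsetD[OF subset_H]])

lemma inj_on_fst: "inj_on fst I"
proof (rule inj_onI)
  fix x y
  assume "x \<in> I" "y \<in> I" "fst x = fst y"
  then show "x = y"
    using independent[of x y] unfolding H_adj_def by blast
qed

lemma finite_incidences: "finite (Sigma I fst)"
  using finite_I card_edge by (intro finite_SigmaI) (auto intro: card_ge_0_finite)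

lemma card_incidences: "card (Sigma I fst) = 2 * card I"
  using finite_I card_edge by (subst card_SigmaI) (auto intro: card_ge_0_finite)

lemma ports_complement:
  assumes "y \<in> I" "y' \<in> I" "y \<noteq> y'" "w \<in> fst y" "w \<in> fst y'"
  shows "port y' w = 1 - port y w"
proof -
  have "fst y \<noteq> fst y'"
    using assms(1-3) inj_on_fst by (auto dest: inj_onD)
  then have "fst y \<inter> fst y' = {w}"
    using simple_graph_edges_Int[OF graph] edge_in_E assms by blast
  then have "H_adj y y'" if "port y w = port y' w"
    using assms(3) that unfolding H_adj_def by (intro conjI disjI2 exI[of _ w]) simp_all
  then have "port y w \<noteq> port y' w"
    using independent assms(1,2) by blast
  moreover have "port y w \<le> 1" "port y' w \<le> 1"
    using port_le_1 assms by simp_all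
  ultimately show ?thesis
    by linarith
qed

lemma edges_at_vertex_unique:
  assumes "x \<in> I" "T \<subseteq> I" "x \<notin> T" "w \<in> fst x"
    and "c \<in> fst ` T" "c' \<in> fst ` T" "w \<in> c" "w \<in> c'"
  shows "c = c'"
proof -
  obtain y y' where "y \<in> T" "y' \<in> T" "c = fst y" "c' = fst y'"
    using assms(5,6) by blast
  moreover have "port y w = 1 - port x w" "port y' w = 1 - port x w"
    using ports_complement[of x y w] ports_complement[of x y' w] assms calculation by auto
  moreover have "y = y'"
  proof (rule ccontr)
    assume "y \<noteq> y'"
    then have "port y' w = 1 - port y w"
      using ports_complement[of y y' w] assms calculation by auto
    with calculation show False
      by arith
  qed
  ultimately show ?thesis
    by simp
qed

lemma alternating_ports:
  assumes T: "T \<subseteq> I" and p: "distinct p" "path_edges p \<subseteq> fst ` T"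
    and start: "\<exists>y\<in>T. fst y = {p ! 0, p ! 1} \<and> port y (p ! 0) = 1"
  shows "Suc i < length p \<Longrightarrow> \<exists>y\<in>T. fst y = {p ! i, p ! Suc i} \<and> port y (p ! i) = 1"
proof (induction i)
  case 0
  with start show ?case
    by simp
next
  case (Suc i)
  then obtain y where y: "y \<in> T" "fst y = {p ! i, p ! Suc i}" "port y (p ! i) = 1"
    by auto
  obtain y' where y': "y' \<in> T" "fst y' = {p ! Suc i, p ! Suc (Suc i)}"
    using p(2) path_edges_nth[OF Suc.prems] by (metis imageE subsetD)
  have "p ! i \<noteq> p ! Suc i" "p ! i \<noteq> p ! Suc (Suc i)"
    using p(1) Suc.prems by (simp_all add: nth_eq_iff_index_eq)
  then have "port y (p ! Suc i) = 0" "y \<noteq> y'"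
    using port_one_unique[of y "p ! i" "p ! Suc i"] y y' T by auto
  then show ?case
    using ports_complement[of y y' "p ! Suc i"] y y' T by auto
qed

lemma closing_edge_ports:
  assumes x: "x \<in> I" "fst x = {a, b}" "a \<noteq> b" "port x a = 0"
    and T: "T \<subseteq> I" "x \<notin> T"
    and p: "p \<noteq> []" "distinct p" "hd p = a" "last p = b" "path_edges p \<subseteq> fst ` T"
  shows "port x b = 1 \<and> (\<exists>y\<in>T. b \<in> fst y \<and> port y b = 0)"
proof -
  have "p ! 0 = a"
    using p(1,3) by (simp add: hd_conv_nth)
  have "Suc 0 < length p"
  proof (rule ccontr)
    assume "\<not> Suc 0 < length p"
    with p(1) obtain u where "p = [u]"
      by (cases p) auto
    with p(3,4) x(3) show False
      by simp
  qed
  then obtain y0 where "y0 \<in> T" "fst y0 = {a, p ! 1}"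
    using p(5) path_edges_nth[of 0 p] \<open>p ! 0 = a\<close> by (metis One_nat_def imageE subsetD)
  moreover have "port y0 a = 1"
    using ports_complement[of x y0 a] x T calculation by auto
  ultimately have alternating: "\<exists>y\<in>T. fst y = {p ! i, p ! Suc i} \<and> port y (p ! i) = 1"
    if "Suc i < length p" for i
    using alternating_ports[OF T(1) p(2,5) _ that] \<open>p ! 0 = a\<close> by auto
  define k where "k = length p - 2"
  have "Suc k = length p - 1"
    using \<open>Suc 0 < length p\<close> unfolding k_def by linarith
  then have k: "Suc k < length p" "p ! Suc k = b" "p ! k \<noteq> b"
    using p(1,2,4) by (auto simp: last_conv_nth nth_eq_iff_index_eq)
  then obtain y where y: "y \<in> T" "fst y = {p ! k, b}" "port y (p ! k) = 1"
    using alternating by fastforce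
  then have "port y b = 0"
    using port_one_unique[of y "p ! k" b] T k(3) by auto
  moreover have "port x b = 1 - port y b"
    using ports_complement[of y x b] x T y by auto
  ultimately show ?thesis
    using y by auto
qed

lemma endpoint_in_cover:
  assumes "x \<in> I" "T \<subseteq> I" "x \<notin> T" "path_cover V E Ps" "cover_edges Ps = fst ` T"
    and "p \<in> Ps" "w \<in> fst x" "w \<in> set p"
  shows "w \<in> {hd p, last p}"
proof -
  have "distinct p" "path_edges p \<subseteq> fst ` T"
    using path_cover_pathD[OF assms(4,6)] assms(5,6) unfolding cover_edges_def by auto
  have "w = hd p \<or> w = last p"
  proof (rule path_endpoint_if_single_edge[OF \<open>distinct p\<close> assms(8)])
    fix c c'
    assume "c \<in> path_edges p" "c' \<in> path_edges p" "w \<in> c" "w \<in> c'"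
    with \<open>path_edges p \<subseteq> fst ` T\<close> show "c = c'"
      using edges_at_vertex_unique[OF assms(1-3,7)] by blast
  qed
  then show ?thesis
    by simp
qed

end

locale H_maximal_independent = H_independent +
  assumes maximal: "h \<in> H_vertices E K \<Longrightarrow> h \<notin> I \<Longrightarrow> \<exists>y\<in>I. H_adj h y"
begin

lemma mixed_copy_blocked:
  assumes "c \<in> E" "c \<notin> fst ` I" "u \<in> c"
  obtains y w where "y \<in> I" "w \<in> fst y" "w \<in> c" "port y w = port (mixed_copy c u) w"
proof -
  have "mixed_copy c u \<in> H_vertices E K" "mixed_copy c u \<notin> I"
    using mixed_copy_in_H_vertices[OF graph assms(1,3)] assms(2) by (auto simp: mixed_copy_def image_iff)
  then obtain y where "y \<in> I" "H_adj (mixed_copy c u) y"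
    using maximal by blast
  moreover have "fst y \<noteq> c"
    using assms(2) \<open>y \<in> I\<close> by blast
  ultimately obtain w where "c \<inter> fst y = {w}" "port (mixed_copy c u) w = port y w"
    unfolding H_adj_def by (auto simp: mixed_copy_def)
  with \<open>y \<in> I\<close> show ?thesis
    by (intro that[of y w]) auto
qed

lemma two_le_card_incidences:
  assumes "c \<in> E"
  shows "2 \<le> card {i \<in> Sigma I fst. snd i \<in> c}"
proof -
  define incidences where "incidences = {i \<in> Sigma I fst. snd i \<in> c}"
  obtain a b where ab: "a \<noteq> b" "c = {a, b}"
    using graph assms by (rule simple_graph_edgeE)
  then have "a \<in> c" "b \<in> c"
    by auto
  obtain i1 i2 where "i1 \<in> incidences" "i2 \<in> incidences" "i1 \<noteq> i2"
  proof (cases "c \<in> fst ` I")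
    case True
    then obtain y where "y \<in> I" "fst y = c"
      by blast
    with ab show ?thesis
      using that[of "(y, a)" "(y, b)"] unfolding incidences_def by auto
  next
    case False
    obtain y1 w1 where 1: "y1 \<in> I" "w1 \<in> fst y1" "w1 \<in> c" "port y1 w1 = port (mixed_copy c b) w1"
      using assms False \<open>b \<in> c\<close> by (rule mixed_copy_blocked)
    obtain y2 w2 where 2: "y2 \<in> I" "w2 \<in> fst y2" "w2 \<in> c" "port y2 w2 = port (mixed_copy c a) w2"
      using assms False \<open>a \<in> c\<close> by (rule mixed_copy_blocked)
    have "(y1, w1) \<noteq> (y2, w2)"
      using 1(3,4) 2(3,4) ab by (auto simp: mixed_copy_def)
    with 1 2 show ?thesis
      using that[of "(y1, w1)" "(y2, w2)"] unfolding incidences_def by auto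
  qed
  moreover have "finite incidences"
    using finite_incidences unfolding incidences_def by (rule finite_subset[rotated]) auto
  ultimately have "\<not> card incidences \<le> Suc 0"
    using card_le_Suc0_iff_eq by blast
  then show ?thesis
    unfolding incidences_def by simp
qed

lemma card_cover_edges_le_twice_card:
  assumes "path_cover V E Ps"
  shows "card (cover_edges Ps) \<le> 2 * card I"
proof -
  let ?C = "cover_edges Ps"
  have "2 * card ?C = (\<Sum>c\<in>?C. 2)"
    by simp
  also have "\<dots> \<le> (\<Sum>c\<in>?C. card {i \<in> Sigma I fst. snd i \<in> c})"
    using two_le_card_incidences cover_edges_subset[OF assms] by (intro sum_mono) blast
  also have "\<dots> = (\<Sum>i\<in>Sigma I fst. card {c \<in> ?C. snd i \<in> c})"
    using finite_cover_edges[OF assms] finite_incidences by (rule double_counting)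
  also have "\<dots> \<le> (\<Sum>i\<in>Sigma I fst. 2)"
    using card_cover_edges_containing_le_2[OF assms] by (intro sum_mono) blast
  also have "\<dots> = 4 * card I"
    by (simp add: card_incidences)
  finally show ?thesis
    by linarith
qed

lemma rho_le_twice_card: "rho V E \<le> 2 * card I"
  using rho_eq_card_cover_edges[OF graph] card_cover_edges_le_twice_card by metis

end

section \<open>Displaced vertices and the upper bound\<close>

definition displaced :: "'a hvert list \<Rightarrow> 'a hvert set" where
  "displaced \<sigma> = {\<sigma> ! t | t. t < length \<sigma> \<and> \<sigma> ! t \<in> greedy_mis H_adj \<sigma> \<and>
     (\<exists>b\<in>fst (\<sigma> ! t). port (\<sigma> ! t) b = 1 \<and>
        (\<exists>y\<in>greedy_mis H_adj \<sigma> \<inter> set (drop (Suc t) \<sigma>). b \<in> fst y \<and> port y b = 0))}"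

locale alg2_run =
  fixes V :: "'a set" and E :: "'a set set" and K :: nat and \<sigma> :: "'a hvert list"
  assumes simple: "simple_graph V E"
    and perm: "\<sigma> \<in> permutations_of_set (H_vertices E K)"
begin

abbreviation accepted :: "'a hvert set" where
  "accepted \<equiv> greedy_mis H_adj \<sigma>"

lemma set_perm: "set \<sigma> = H_vertices E K" and distinct_perm: "distinct \<sigma>"
  using perm unfolding permutations_of_set_def by auto

end

sublocale alg2_run \<subseteq> H_maximal_independent V E K "greedy_mis H_adj \<sigma>"
proof
  show "simple_graph V E"
    by (rule simple)
  show "greedy_mis H_adj \<sigma> \<subseteq> H_vertices E K"
    using greedy_mis_subset[of H_adj \<sigma>] set_perm by simp
  show "\<not> H_adj x y" if "x \<in> greedy_mis H_adj \<sigma>" "y \<in> greedy_mis H_adj \<sigma>" for x y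
    by (rule greedy_mis_independent[OF H_adj_sym H_adj_irrefl that])
  show "\<exists>y\<in>greedy_mis H_adj \<sigma>. H_adj h y" if "h \<in> H_vertices E K" "h \<notin> greedy_mis H_adj \<sigma>" for h
    using greedy_mis_maximal[of h \<sigma> H_adj] that set_perm by simp
qed

context alg2_run
begin

lemma displacedI:
  assumes "t < length \<sigma>" "\<sigma> ! t \<in> accepted" "b \<in> fst (\<sigma> ! t)" "port (\<sigma> ! t) b = 1"
    and "y \<in> accepted" "y \<in> set (drop (Suc t) \<sigma>)" "b \<in> fst y" "port y b = 0"
  shows "\<sigma> ! t \<in> displaced \<sigma>"
  unfolding displaced_def using assms by blast

lemma displaced_subset: "displaced \<sigma> \<subseteq> accepted"
  unfolding displaced_def by blast

lemma set_drop_perm: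
  assumes "n < length \<sigma>"
  shows "set (drop n \<sigma>) = insert (\<sigma> ! n) (set (drop (Suc n) \<sigma>))" "\<sigma> ! n \<notin> set (drop (Suc n) \<sigma>)"
proof -
  have "drop n \<sigma> = \<sigma> ! n # drop (Suc n) \<sigma>"
    using assms by (rule Cons_nth_drop_Suc[symmetric])
  moreover have "distinct (drop n \<sigma>)"
    using distinct_perm by simp
  ultimately show "set (drop n \<sigma>) = insert (\<sigma> ! n) (set (drop (Suc n) \<sigma>))" "\<sigma> ! n \<notin> set (drop (Suc n) \<sigma>)"
    by (metis list.set(2), metis distinct.simps(2))
qed

lemma closing_edge_displaced:
  assumes x: "n < length \<sigma>" "\<sigma> ! n = x" "x \<in> accepted" "fst x = {a, b}" "a \<noteq> b"
    and T: "T \<subseteq> accepted \<inter> set (drop (Suc n) \<sigma>)"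
    and p: "p \<noteq> []" "distinct p" "{hd p, last p} = {a, b}" "path_edges p \<subseteq> fst ` T"
  shows "x \<in> displaced \<sigma>"
proof -
  have "T \<subseteq> accepted" "x \<notin> T"
    using T set_drop_perm(2)[OF x(1)] x(2) by auto
  have oriented: "x \<in> displaced \<sigma>"
    if orient: "port x u = 0" "fst x = {u, v}" "u \<noteq> v" "q \<noteq> []" "distinct q" "hd q = u" "last q = v"
      "path_edges q \<subseteq> fst ` T" for u v q
  proof -
    obtain y where "port x v = 1" "y \<in> T" "v \<in> fst y" "port y v = 0"
      using closing_edge_ports[OF x(3) orient(2,3,1) \<open>T \<subseteq> accepted\<close> \<open>x \<notin> T\<close> orient(4-8)] by blast
    then show ?thesis
      using displacedI[OF x(1), of v y] x(2,3) T orient(2) by auto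
  qed
  have "port x a = 0 \<or> port x b = 0"
    using port_le_1 port_one_unique[of x a b] x(3-5) by fastforce
  moreover have "(hd p = a \<and> last p = b) \<or> (hd p = b \<and> last p = a)"
    using p(3) x(5) by (auto simp: doubleton_eq_iff)
  ultimately show ?thesis
    using oriented[of a b p] oriented[of b a p] oriented[of a b "rev p"] oriented[of b a "rev p"] p x(4,5)
    by (auto simp: hd_rev last_rev insert_commute)
qed

lemma suffix_path_cover_step:
  assumes n: "n < length \<sigma>"
    and cover: "path_cover V E Ps" "covers V Ps"
    and edges: "cover_edges Ps = fst ` ((accepted - displaced \<sigma>) \<inter> set (drop (Suc n) \<sigma>))"
  shows "\<exists>Ps'. path_cover V E Ps' \<and> covers V Ps' \<and>
    cover_edges Ps' = fst ` ((accepted - displaced \<sigma>) \<inter> set (drop n \<sigma>))"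
proof -
  define x where "x = \<sigma> ! n"
  define T where "T = (accepted - displaced \<sigma>) \<inter> set (drop (Suc n) \<sigma>)"
  have suffix: "(accepted - displaced \<sigma>) \<inter> set (drop n \<sigma>) =
      (if x \<in> accepted - displaced \<sigma> then insert x T else T)"
    using set_drop_perm[OF n] unfolding x_def T_def by auto
  show ?thesis
  proof (cases "x \<in> accepted - displaced \<sigma>")
    case False
    with cover edges show ?thesis
      unfolding suffix T_def by auto
  next
    case True
    have "T \<subseteq> accepted \<inter> set (drop (Suc n) \<sigma>)" "x \<notin> T" "x \<in> accepted"
      using True set_drop_perm(2)[OF n] unfolding x_def T_def by auto
    obtain a b where ab: "a \<noteq> b" "fst x = {a, b}"
      using simple edge_in_E[OF \<open>x \<in> accepted\<close>] by (rule simple_graph_edgeE)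
    then have "a \<in> V" "b \<in> V"
      using simple_graph_edge_subset[OF simple edge_in_E[OF \<open>x \<in> accepted\<close>]] by auto
    then obtain pa pb where pa: "pa \<in> Ps" "a \<in> set pa" and pb: "pb \<in> Ps" "b \<in> set pb"
      using cover(2) unfolding covers_def by blast
    have ends: "a \<in> {hd pa, last pa}" "b \<in> {hd pb, last pb}"
      using endpoint_in_cover[OF \<open>x \<in> accepted\<close> _ \<open>x \<notin> T\<close> cover(1)] edges pa pb ab
        \<open>T \<subseteq> accepted \<inter> set (drop (Suc n) \<sigma>)\<close> unfolding T_def by auto
    have "pa \<noteq> pb"
    proof
      assume "pa = pb"
      then have "{hd pa, last pa} = {a, b}"
        using ends ab(1) by auto
      moreover have "pa \<noteq> []" "distinct pa" "path_edges pa \<subseteq> fst ` T"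
        using path_cover_pathD[OF cover(1) pa(1)] pa(1) edges unfolding cover_edges_def T_def by auto
      ultimately have "x \<in> displaced \<sigma>"
        using closing_edge_displaced[OF n x_def[symmetric] \<open>x \<in> accepted\<close> ab(2,1)
            \<open>T \<subseteq> accepted \<inter> set (drop (Suc n) \<sigma>)\<close>] by blast
      with True show False
        by simp
    qed
    moreover have "{a, b} \<in> E"
      using ab edge_in_E[OF \<open>x \<in> accepted\<close>] by simp
    ultimately obtain Ps' where "path_cover V E Ps'" "covers V Ps'"
      "cover_edges Ps' = insert {a, b} (cover_edges Ps)"
      using path_cover_merge[OF cover pa(1) pb(1) _ ends] by blast
    with True ab show ?thesis
      unfolding suffix edges T_def by auto
  qed
qed

lemma suffix_path_cover:
  "m \<le> length \<sigma> \<Longrightarrow> \<exists>Ps. path_cover V E Ps \<and> covers V Ps \<and>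
    cover_edges Ps = fst ` ((accepted - displaced \<sigma>) \<inter> set (drop m \<sigma>))"
proof (induction m rule: inc_induct)
  case base
  have "finite V"
    using simple unfolding simple_graph_def by simp
  then show ?case
    using path_cover_singletons[OF \<open>finite V\<close>] by auto
next
  case (step n)
  then show ?case
    using suffix_path_cover_step by blast
qed

lemma card_accepted_minus_displaced_le_rho: "card (accepted - displaced \<sigma>) \<le> rho V E"
proof -
  obtain Ps where "path_cover V E Ps" "cover_edges Ps = fst ` ((accepted - displaced \<sigma>) \<inter> set \<sigma>)"
    using suffix_path_cover[of 0] by auto
  moreover have "(accepted - displaced \<sigma>) \<inter> set \<sigma> = accepted - displaced \<sigma>"
    using greedy_mis_subset[of H_adj \<sigma>] by blast
  moreover have "card (fst ` (accepted - displaced \<sigma>)) = card (accepted - displaced \<sigma>)"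
    using inj_on_subset[OF inj_on_fst Diff_subset] by (rule card_image)
  ultimately show ?thesis
    using card_cover_edges_le_rho[OF simple] by metis
qed

lemma card_accepted_le: "card accepted \<le> rho V E + card (displaced \<sigma>)"
  using card_accepted_minus_displaced_le_rho card_Diff_subset[OF finite_subset[OF displaced_subset finite_I]
      displaced_subset] card_mono[OF finite_I displaced_subset] by linarith

lemma nth_notin_set_take: "t \<le> j \<Longrightarrow> j < length \<sigma> \<Longrightarrow> \<sigma> ! j \<notin> set (take t \<sigma>)"
  using distinct_perm by (auto simp: in_set_conv_nth nth_eq_iff_index_eq)

lemma zero_copy_compatible_with_prefix:
  assumes t: "t < length \<sigma>" "\<sigma> ! t = x" "x \<in> accepted" "b \<in> fst x" "port x b = 1"
    and y: "y \<in> accepted" "y \<in> set (drop (Suc t) \<sigma>)" "b \<in> fst y" "port y b = 0"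
    and y': "y' \<in> greedy_mis H_adj (take t \<sigma>)"
  shows "\<not> H_adj (zero_copy (fst x) i) y'"
proof
  assume adj: "H_adj (zero_copy (fst x) i) y'"
  have "y' \<in> accepted" "y' \<in> set (take t \<sigma>)"
    using y' greedy_mis_take[OF distinct_perm] by auto
  have "y' \<noteq> x"
    using nth_notin_set_take[OF order.refl t(1)] t(2) \<open>y' \<in> set (take t \<sigma>)\<close> by auto
  then have "fst y' \<noteq> fst x"
    using inj_onD[OF inj_on_fst _ \<open>y' \<in> accepted\<close> t(3)] by auto
  with adj obtain w where w: "w \<in> fst x" "w \<in> fst y'" "port y' w = 0"
    unfolding H_adj_def zero_copy_def by auto
  then have "port x w = 1"
    using ports_complement[OF \<open>y' \<in> accepted\<close> t(3) \<open>y' \<noteq> x\<close>] by simp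
  then have "w = b"
    using port_one_unique[OF t(3) t(4) w(1)] t(5) by (cases "w = b") simp_all
  moreover have "y' \<noteq> y"
    using \<open>y' \<in> set (take t \<sigma>)\<close> y(2) set_take_disj_set_drop_if_distinct[OF distinct_perm, of t "Suc t"]
    by auto
  ultimately show False
    using ports_complement[OF \<open>y' \<in> accepted\<close> y(1) \<open>y' \<noteq> y\<close>, of b] w y(3,4) by simp
qed

lemma zero_copy_fits_before_displaced:
  assumes "x \<in> displaced \<sigma>" "i < K"
  obtains t s where "t < s" "s < length \<sigma>" "\<sigma> ! t = x" "\<sigma> ! s = zero_copy (fst x) i"
    "\<forall>y\<in>greedy_mis H_adj (take t \<sigma>). \<not> H_adj (zero_copy (fst x) i) y"
proof -
  define z where "z = zero_copy (fst x) i"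
  obtain t b y where t: "t < length \<sigma>" "\<sigma> ! t = x" "x \<in> accepted" "b \<in> fst x" "port x b = 1"
    and y: "y \<in> accepted" "y \<in> set (drop (Suc t) \<sigma>)" "b \<in> fst y" "port y b = 0"
    using assms(1) unfolding displaced_def by blast
  have compatible: "\<forall>y'\<in>greedy_mis H_adj (take t \<sigma>). \<not> H_adj z y'"
    unfolding z_def using zero_copy_compatible_with_prefix[OF t y] by blast
  have "z \<notin> accepted"
  proof
    assume "z \<in> accepted"
    then have "z = x"
      using inj_onD[OF inj_on_fst _ _ t(3)] by (simp add: z_def zero_copy_def)
    moreover have "port z b = 0"
      by (simp add: z_def zero_copy_def)
    ultimately show False
      using t(5) by simp
  qed
  have "z \<in> set \<sigma>"
    unfolding z_def set_perm using zero_copy_in_H_vertices edge_in_E[OF t(3)] assms(2) .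
  then obtain s where s: "s < length \<sigma>" "\<sigma> ! s = z"
    by (metis in_set_conv_nth)
  have "\<not> s \<le> t"
  proof
    assume "s \<le> t"
    obtain y' where "y' \<in> greedy_mis H_adj (take s \<sigma>)" "H_adj z y'"
      using nth_in_greedy_mis_iff[OF distinct_perm s(1), of H_adj] s(2) \<open>z \<notin> accepted\<close> by auto
    moreover have "greedy_mis H_adj (take s \<sigma>) \<subseteq> greedy_mis H_adj (take t \<sigma>)"
      unfolding greedy_mis_take[OF distinct_perm] using set_take_subset_set_take[OF \<open>s \<le> t\<close>, of \<sigma>]
      by blast
    ultimately show False
      using compatible by blast
  qed
  then show ?thesis
    using that[of t s] s t(2) compatible unfolding z_def by auto
qed

lemma zero_copy_accepted_after_swap:
  assumes "x \<in> displaced \<sigma>" "i < K"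
  defines "\<sigma>' \<equiv> map (Transposition.transpose x (zero_copy (fst x) i)) \<sigma>"
    \<comment> \<open>qualified: plain \<open>transpose\<close> is the matrix transpose of HOL-Analysis\<close>
  shows "\<sigma>' \<in> permutations_of_set (H_vertices E K)" "zero_copy (fst x) i \<in> greedy_mis H_adj \<sigma>'"
proof -
  define z where "z = zero_copy (fst x) i"
  obtain t s where ts: "t < s" "s < length \<sigma>" "\<sigma> ! t = x" "\<sigma> ! s = z"
    and compatible: "\<forall>y\<in>greedy_mis H_adj (take t \<sigma>). \<not> H_adj z y"
    using zero_copy_fits_before_displaced[OF assms(1,2)] unfolding z_def by metis
  have "x \<in> H_vertices E K" "z \<in> H_vertices E K"
    using ts set_perm by (metis less_trans nth_mem)+
  then have "Transposition.transpose x z permutes H_vertices E K"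
    by (rule permutes_swap_id)
  then show perm': "\<sigma>' \<in> permutations_of_set (H_vertices E K)"
    using perm permutations_of_set_image_permutes unfolding \<sigma>'_def z_def by blast
  have "take t \<sigma>' = map (Transposition.transpose x z) (take t \<sigma>)"
    unfolding \<sigma>'_def z_def by (simp add: take_map)
  also have "\<dots> = take t \<sigma>"
  proof (intro map_idI transpose_apply_other)
    fix y
    assume "y \<in> set (take t \<sigma>)"
    moreover have "x \<notin> set (take t \<sigma>)" "z \<notin> set (take t \<sigma>)"
      using nth_notin_set_take[of t t] nth_notin_set_take[of t s] ts by auto
    ultimately show "y \<noteq> x" "y \<noteq> z"
      by auto
  qed
  finally have "take t \<sigma>' = take t \<sigma>" .
  moreover have "\<sigma>' ! t = z" "t < length \<sigma>'"
    using ts unfolding \<sigma>'_def z_def by auto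
  ultimately show "zero_copy (fst x) i \<in> greedy_mis H_adj \<sigma>'"
    using nth_in_greedy_mis_iff[OF permutations_of_setD(2)[OF perm'], of t H_adj] compatible
    unfolding z_def by auto
qed

lemma displaced_subset_mixed: "displaced \<sigma> \<subseteq> mixed_vertices E K"
  using displaced_subset subset_H unfolding displaced_def mixed_vertices_def by blast

lemma sum_zero_copies_accepted_le:
  "(\<Sum>x\<in>mixed_vertices E K. card {i \<in> {..<K}. zero_copy (fst x) i \<in> accepted}) \<le> 2 * rho V E"
proof -
  define Z where "Z = {z \<in> accepted. \<forall>w. port z w = 0}"
  let ?M = "mixed_vertices E K"
  have "finite Z"
    using finite_I unfolding Z_def by simp
  have "finite ?M"
    using finite_H_vertices[OF graph] unfolding mixed_vertices_def by simp
  have "(\<Sum>x\<in>?M. card {i \<in> {..<K}. zero_copy (fst x) i \<in> accepted}) \<le> (\<Sum>x\<in>?M. card {z \<in> Z. fst z = fst x})"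
  proof (rule sum_mono, rule card_inj_on_le)
    fix x
    show "inj_on (zero_copy (fst x)) {i \<in> {..<K}. zero_copy (fst x) i \<in> accepted}"
      by (rule inj_onI) (simp add: zero_copy_def)
    show "zero_copy (fst x) ` {i \<in> {..<K}. zero_copy (fst x) i \<in> accepted} \<subseteq> {z \<in> Z. fst z = fst x}"
      unfolding Z_def zero_copy_def by auto
    show "finite {z \<in> Z. fst z = fst x}"
      using \<open>finite Z\<close> by simp
  qed
  also have "\<dots> = (\<Sum>z\<in>Z. card {x \<in> ?M. fst z = fst x})"
    using \<open>finite ?M\<close> \<open>finite Z\<close> by (rule double_counting)
  also have "\<dots> \<le> (\<Sum>z\<in>Z. 2)"
  proof (rule sum_mono)
    fix z
    assume "z \<in> Z"
    then have "fst z \<in> E"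
      using edge_in_E unfolding Z_def by blast
    then show "card {x \<in> ?M. fst z = fst x} \<le> 2"
      using card_mixed_vertices_on_edge[OF graph, of "fst z" K] by (simp add: eq_commute)
  qed
  also have "\<dots> = 2 * card Z"
    by simp
  also have "card Z \<le> card (accepted - displaced \<sigma>)"
    using finite_I unfolding Z_def displaced_def by (intro card_mono) auto
  also have "\<dots> \<le> rho V E"
    by (rule card_accepted_minus_displaced_le_rho)
  finally show ?thesis
    by simp
qed

end

section \<open>Averaging over permutations\<close>

lemma card_perms_displaced_le:
  assumes "simple_graph V E" "i < K"
  shows "card {\<sigma> \<in> permutations_of_set (H_vertices E K). x \<in> displaced \<sigma>}
    \<le> card {\<sigma> \<in> permutations_of_set (H_vertices E K). zero_copy (fst x) i \<in> greedy_mis H_adj \<sigma>}"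
proof (rule card_inj_on_le)
  let ?swap = "map (Transposition.transpose x (zero_copy (fst x) i))"
  show "inj_on ?swap {\<sigma> \<in> permutations_of_set (H_vertices E K). x \<in> displaced \<sigma>}"
    using inj_mapI[OF inj_transpose] by (rule inj_on_subset) simp
  show "?swap ` {\<sigma> \<in> permutations_of_set (H_vertices E K). x \<in> displaced \<sigma>}
    \<subseteq> {\<sigma> \<in> permutations_of_set (H_vertices E K). zero_copy (fst x) i \<in> greedy_mis H_adj \<sigma>}"
    using alg2_run.zero_copy_accepted_after_swap[OF alg2_run.intro[OF assms(1)] _ assms(2)] by blast
qed simp

lemma sum_card_displaced_le:
  assumes "simple_graph V E"
  shows "K * (\<Sum>\<sigma>\<in>permutations_of_set (H_vertices E K). card (displaced \<sigma>))
    \<le> 2 * rho V E * card (permutations_of_set (H_vertices E K))"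
proof -
  let ?P = "permutations_of_set (H_vertices E K)" and ?M = "mixed_vertices E K"
  let ?accepted = "\<lambda>x i \<sigma>. zero_copy (fst x) i \<in> greedy_mis H_adj \<sigma>"
  have "finite ?M"
    using finite_H_vertices[OF assms] unfolding mixed_vertices_def by simp
  have "{x \<in> ?M. x \<in> displaced \<sigma>} = displaced \<sigma>" if "\<sigma> \<in> ?P" for \<sigma>
    using alg2_run.displaced_subset_mixed[OF alg2_run.intro[OF assms that]] by blast
  then have "(\<Sum>\<sigma>\<in>?P. card (displaced \<sigma>)) = (\<Sum>\<sigma>\<in>?P. card {x \<in> ?M. x \<in> displaced \<sigma>})"
    by simp
  also have "\<dots> = (\<Sum>x\<in>?M. card {\<sigma> \<in> ?P. x \<in> displaced \<sigma>})"
    using finite_permutations_of_set \<open>finite ?M\<close> by (rule double_counting)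
  finally have "K * (\<Sum>\<sigma>\<in>?P. card (displaced \<sigma>)) = (\<Sum>x\<in>?M. \<Sum>i<K. card {\<sigma> \<in> ?P. x \<in> displaced \<sigma>})"
    by (simp add: sum_distrib_left)
  also have "\<dots> \<le> (\<Sum>x\<in>?M. \<Sum>i<K. card {\<sigma> \<in> ?P. ?accepted x i \<sigma>})"
    using card_perms_displaced_le[OF assms] by (intro sum_mono) blast
  also have "\<dots> = (\<Sum>x\<in>?M. \<Sum>\<sigma>\<in>?P. card {i \<in> {..<K}. ?accepted x i \<sigma>})"
    using finite_permutations_of_set by (intro sum.cong refl double_counting) simp_all
  also have "\<dots> = (\<Sum>\<sigma>\<in>?P. \<Sum>x\<in>?M. card {i \<in> {..<K}. ?accepted x i \<sigma>})"
    by (rule sum.swap)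
  also have "\<dots> \<le> (\<Sum>\<sigma>\<in>?P. 2 * rho V E)"
    using alg2_run.sum_zero_copies_accepted_le[OF alg2_run.intro[OF assms]] by (intro sum_mono) blast
  finally show ?thesis
    by (simp add: mult.commute)
qed

lemma sum_card_greedy_mis_bounds:
  fixes V :: "'a set" and K :: nat
  assumes "simple_graph V E"
  defines "P \<equiv> permutations_of_set (H_vertices E K)"
  shows "rho V E * card P \<le> 2 * (\<Sum>\<sigma>\<in>P. card (greedy_mis H_adj \<sigma>))"
    and "K * (\<Sum>\<sigma>\<in>P. card (greedy_mis H_adj \<sigma>)) \<le> (K + 2) * rho V E * card P"
proof -
  have run: "alg2_run V E K \<sigma>" if "\<sigma> \<in> P" for \<sigma>
    using assms(1) that unfolding P_def by unfold_locales
  have "rho V E \<le> 2 * card (greedy_mis H_adj \<sigma>)" if "\<sigma> \<in> P" for \<sigma>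
  proof -
    interpret alg2_run V E K \<sigma>
      using run[OF that] .
    show ?thesis
      by (rule rho_le_twice_card)
  qed
  then have "(\<Sum>\<sigma>\<in>P. rho V E) \<le> (\<Sum>\<sigma>\<in>P. 2 * card (greedy_mis H_adj \<sigma>))"
    by (rule sum_mono)
  then show "rho V E * card P \<le> 2 * (\<Sum>\<sigma>\<in>P. card (greedy_mis H_adj \<sigma>))"
    by (simp add: sum_distrib_left mult.commute)
  have "K * (\<Sum>\<sigma>\<in>P. card (greedy_mis H_adj \<sigma>)) \<le> K * (\<Sum>\<sigma>\<in>P. rho V E + card (displaced \<sigma>))"
    using alg2_run.card_accepted_le[OF run] by (intro mult_le_mono2 sum_mono)
  also have "\<dots> = K * rho V E * card P + K * (\<Sum>\<sigma>\<in>P. card (displaced \<sigma>))"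
    by (simp add: sum.distrib algebra_simps)
  also have "\<dots> \<le> (K + 2) * rho V E * card P"
    using sum_card_displaced_le[OF assms(1), of K] unfolding P_def by (simp add: algebra_simps)
  finally show "K * (\<Sum>\<sigma>\<in>P. card (greedy_mis H_adj \<sigma>)) \<le> (K + 2) * rho V E * card P" .
qed

lemma alg2_expected_eq_average:
  fixes V :: "'a set" and K :: nat
  assumes "simple_graph V E"
  defines "P \<equiv> permutations_of_set (H_vertices E K)"
  shows "alg2_expected E K = (\<Sum>\<sigma>\<in>P. real (card (greedy_mis H_adj \<sigma>))) / card P"
proof -
  have "P \<noteq> {}"
    unfolding P_def using finite_H_vertices[OF assms(1)] by simp
  moreover have "card (alg2_output \<sigma>) = card (greedy_mis H_adj \<sigma>)" if "\<sigma> \<in> P" for \<sigma>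
  proof -
    interpret alg2_run V E K \<sigma>
      using assms(1) that unfolding P_def by unfold_locales
    show ?thesis
      unfolding alg2_output_def using inj_on_fst by (rule card_image)
  qed
  ultimately show ?thesis
    unfolding alg2_expected_def P_def by (simp add: integral_pmf_of_set)
qed

theorem lemma4p5:
  fixes V :: "'a set" and E :: "'a set set" and K :: nat
  assumes "simple_graph V E" and "K > 0"
  shows "real (rho V E) / 2 \<le> alg2_expected E K \<and>
         alg2_expected E K \<le> (1 + 2 / real K) * real (rho V E)"
proof -
  let ?P = "permutations_of_set (H_vertices E K)"
  define S where "S = real (\<Sum>\<sigma>\<in>?P. card (greedy_mis H_adj \<sigma>))"
  define N where "N = real (card ?P)"
  have "N > 0"
    unfolding N_def using finite_H_vertices[OF assms(1)] by (simp add: card_gt_0_iff)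
  have expected: "alg2_expected E K = S / N"
    unfolding S_def N_def using alg2_expected_eq_average[OF assms(1)] by simp
  have "real (rho V E * card ?P) \<le> real (2 * (\<Sum>\<sigma>\<in>?P. card (greedy_mis H_adj \<sigma>)))"
    and "real (K * (\<Sum>\<sigma>\<in>?P. card (greedy_mis H_adj \<sigma>))) \<le> real ((K + 2) * rho V E * card ?P)"
    using sum_card_greedy_mis_bounds[OF assms(1), of K] by (simp_all only: of_nat_le_iff)
  then have "real (rho V E) * N \<le> 2 * S" "real K * S \<le> (real K + 2) * real (rho V E) * N"
    unfolding S_def N_def by (simp_all add: algebra_simps)
  then show ?thesis
    unfolding expected using \<open>N > 0\<close> \<open>K > 0\<close> by (simp add: field_simps)
qed

end
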